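(* Let $\nu_0$ be a probability distribution on $[0,1]$ (not necessarily finitely supported) with mean $\mathbb{E}(\nu_0)\in(0,1)$, let $n\ge1$ and let $X_1,\dots,X_n$ be independent random variables with common distribution $\nu_0$, with empirical distribution $\hat\nu_n=\frac1n\sum_{k=1}^n\delta_{X_k}$. For $\epsilon>0$ define \[ U(\hat\nu_n,\epsilon)=\sup\{\mathbb{E}(\nu'):\nu'\in\mathfrak{M}_1(\mathrm{Supp}(\hat\nu_n)\cup\{1\}),\ \mathrm{KL}(\hat\nu_n,\nu')\le\epsilon\}. \] Then for all $\epsilon>0$, \[ \mathbb{P}\{U(\hat\nu_n,\epsilon)\le\mathbb{E}(\nu_0)\}\le\mathbb{P}\{\mathcal{K}_{\inf}(\hat\nu_n,\mathbb{E}(\nu_0))\ge\epsilon\}\le e(n+2)\exp(-n\epsilon). \]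
   Context: $\mathfrak{M}_1(S)$ denotes the set of probability distributions on a set $S$, $\mathrm{Supp}$ the (finite) support, $\mathbb{E}(\nu)$ the mean of $\nu$, and $\mathrm{KL}$ the Kullback–Leibler divergence. $\mathcal{F}$ is the set of finitely supported probability distributions on $[0,1]$, and for $\nu\in\mathcal{F}$, $\mu\in\mathbb{R}$, $\mathcal{K}_{\inf}(\nu,\mu)=\inf\{\mathrm{KL}(\nu,\nu'):\nu'\in\mathcal{F},\ \mathbb{E}(\nu')>\mu\}$. *)

theory Defs
  imports "HOL-Probability.Probability"
begin

text \<open>Finitely supported probability distributions are represented as elements of
  type real pmf with finite support.\<close>

definition pmf_mean :: "real pmf \<Rightarrow> real" where
  "pmf_mean p = measure_pmf.expectation p (\<lambda>x. x)"

definition KL :: "real pmf \<Rightarrow> real pmf \<Rightarrow> ereal" where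
  "KL p q = (if set_pmf p \<subseteq> set_pmf q
             then ereal (\<Sum>x\<in>set_pmf p. pmf p x * ln (pmf p x / pmf q x))
             else \<infinity>)"

definition F_class :: "real pmf set" where
  "F_class = {p. finite (set_pmf p) \<and> set_pmf p \<subseteq> {0..1}}"

definition Kinf :: "real pmf \<Rightarrow> real \<Rightarrow> ereal" where
  "Kinf \<nu> \<mu> = Inf {KL \<nu> \<nu>' | \<nu>'. \<nu>' \<in> F_class \<and> pmf_mean \<nu>' > \<mu>}"

definition Ucb :: "real pmf \<Rightarrow> real \<Rightarrow> real" where
  "Ucb \<nu> \<epsilon> = Sup {pmf_mean \<nu>' | \<nu>'. set_pmf \<nu>' \<subseteq> set_pmf \<nu> \<union> {1} \<and> KL \<nu> \<nu>' \<le> ereal \<epsilon>}"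

definition empirical :: "nat \<Rightarrow> (nat \<Rightarrow> real) \<Rightarrow> real pmf" where
  "empirical n x = pmf_of_multiset (mset (map x [0..<n]))"

end

theory Submission
  imports Defs
begin

text \<open>Distributions on \<open>Supp(\<nu>\<^sub>n) \<union> {1}\<close> are reweightings of the samples, so both
  \<open>U(\<nu>\<^sub>n, \<epsilon>) \<le> \<mu>\<close> and \<open>K\<^sub>i\<^sub>n\<^sub>f(\<nu>\<^sub>n, \<mu>) \<ge> \<epsilon>\<close> become statements about weight vectors, and
  the first implies the second. If \<open>K\<^sub>i\<^sub>n\<^sub>f(\<nu>\<^sub>n, \<mu>) \<ge> \<epsilon>\<close>, some \<open>\<lambda> \<in> [0, 1]\<close> satisfies
  \<open>\<Prod>\<^sub>k (1 - \<lambda> (X\<^sub>k - \<mu>) / (1 - \<mu>)) \<ge> e\<^sup>n\<^sup>\<epsilon>\<close>: take \<open>\<lambda>\<close> maximising the left-hand side; if the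
  product were smaller, the weights proportional to \<open>1 / (1 - \<lambda> (X\<^sub>k - \<mu>) / (1 - \<mu>))\<close>, slightly
  shrunk in favour of the atom at \<open>1\<close>, would give a distribution of KL divergence below \<open>\<epsilon>\<close> and
  mean above \<open>\<mu>\<close>. Rounding \<open>\<lambda>\<close> to the grid \<open>j / (n + 1)\<close> loses at most a factor \<open>e\<close>, and each
  of the \<open>n + 2\<close> grid products is a nonnegative random variable of mean one, so Markov's
  inequality and a union bound finish the proof.\<close>

section \<open>Empirical distributions\<close>

definition sample_count :: "nat \<Rightarrow> (nat \<Rightarrow> real) \<Rightarrow> real \<Rightarrow> nat" where
  "sample_count n x y = card {k. k < n \<and> x k = y}"

lemma sample_count_pos: "k < n \<Longrightarrow> sample_count n x (x k) > 0"
  unfolding sample_count_def by (subst card_gt_0_iff) auto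

lemma count_mset_map_upt: "count (mset (map x [0..<n])) y = sample_count n x y"
proof (induction n)
  case 0
  then show ?case by (simp add: sample_count_def)
next
  case (Suc n)
  have "{k. k < Suc n \<and> x k = y} = {k. k < n \<and> x k = y} \<union> (if x n = y then {n} else {})"
    by (auto simp: less_Suc_eq)
  then have "sample_count n x y + (if x n = y then 1 else 0) = sample_count (Suc n) x y"
    by (auto simp: sample_count_def simp del: Collect_conj_eq)
  with Suc show ?case by (cases "x n = y") auto
qed

lemma mset_map_upt_ne_empty: "n \<ge> 1 \<Longrightarrow> mset (map x [0..<n]) \<noteq> {#}"
  by (cases n) auto

lemma sum_samples_grouped:
  "(\<Sum>k<n. g (x k) / real (sample_count n x (x k))) = (\<Sum>y\<in>x ` {..<n}. g y)"
proof -
  have "(\<Sum>k<n. g (x k) / real (sample_count n x (x k)))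
      = (\<Sum>y\<in>x ` {..<n}. \<Sum>k\<in>{k. k \<in> {..<n} \<and> x k = y}. g y / real (sample_count n x y))"
    by (rule sum.image_gen[THEN trans]) (auto intro!: sum.cong)
  also have "\<dots> = (\<Sum>y\<in>x ` {..<n}. g y)"
  proof (rule sum.cong[OF refl])
    fix y assume "y \<in> x ` {..<n}"
    then have "sample_count n x y > 0"
      using sample_count_pos[of _ n x] by auto
    moreover have "card {k. k \<in> {..<n} \<and> x k = y} = sample_count n x y"
      by (simp add: sample_count_def)
    ultimately show "(\<Sum>k\<in>{k. k \<in> {..<n} \<and> x k = y}. g y / real (sample_count n x y)) = g y"
      by simp
  qed
  finally show ?thesis .
qed

lemma sum_sample_count: "(\<Sum>y\<in>x ` {..<n}. real (sample_count n x y)) = real n"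
proof -
  have "(\<Sum>y\<in>x ` {..<n}. real (sample_count n x y))
      = (\<Sum>k<n. real (sample_count n x (x k)) / real (sample_count n x (x k)))"
    by (rule sum_samples_grouped[symmetric])
  also have "\<dots> = (\<Sum>k<n. 1)"
    by (rule sum.cong) (use sample_count_pos[of _ n x] in force)+
  finally show ?thesis by simp
qed

lemma set_pmf_empirical: "n \<ge> 1 \<Longrightarrow> set_pmf (empirical n x) = x ` {..<n}"
  unfolding empirical_def by (subst set_pmf_of_multiset[OF mset_map_upt_ne_empty]) auto

lemma pmf_empirical: "n \<ge> 1 \<Longrightarrow> pmf (empirical n x) y = real (sample_count n x y) / real n"
  unfolding empirical_def
  by (simp only: pmf_of_multiset[OF mset_map_upt_ne_empty] count_mset_map_upt size_mset length_map
      length_upt diff_zero)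

lemma sum_empirical_eq_average:
  assumes "n \<ge> 1"
  shows "(\<Sum>y\<in>set_pmf (empirical n x). pmf (empirical n x) y * f y) = (\<Sum>k<n. f (x k)) / real n"
proof -
  have "(\<Sum>y\<in>set_pmf (empirical n x). pmf (empirical n x) y * f y)
      = (\<Sum>k<n. real (sample_count n x (x k)) / real n * f (x k) / real (sample_count n x (x k)))"
    using assms by (simp add: set_pmf_empirical pmf_empirical sum_samples_grouped[symmetric])
  also have "\<dots> = (\<Sum>k<n. f (x k) / real n)"
    by (rule sum.cong) (use sample_count_pos[of _ n x] in fastforce)+
  finally show ?thesis by (simp add: sum_divide_distrib)
qed

section \<open>Reweighting the samples\<close>

text \<open>A distribution on the samples and the point \<open>1\<close> is encoded by a weight \<open>q k > 0\<close> on each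
  sample index \<open>k < n\<close> and a weight \<open>q0 \<ge> 0\<close> on \<open>1\<close>; tied samples add up their weights.
  The divergence \<open>weights_KL n q\<close> of the weights from the uniform weights \<open>1 / n\<close> bounds the KL
  divergence of the reweighting from the empirical distribution, and every distribution charging
  all samples determines weights (\<open>pmf_weights\<close>) attaining its KL divergence.\<close>

definition admissible_weights :: "nat \<Rightarrow> (nat \<Rightarrow> real) \<Rightarrow> real \<Rightarrow> bool" where
  "admissible_weights n q q0 \<longleftrightarrow> (\<forall>k<n. 0 < q k) \<and> 0 \<le> q0 \<and> (\<Sum>k<n. q k) + q0 = 1"

definition reweighting :: "nat \<Rightarrow> (nat \<Rightarrow> real) \<Rightarrow> real \<Rightarrow> (nat \<Rightarrow> real) \<Rightarrow> real pmf" where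
  "reweighting n q q0 x = pmf_of_list ((1, q0) # map (\<lambda>k. (x k, q k)) [0..<n])"

definition weights_KL :: "nat \<Rightarrow> (nat \<Rightarrow> real) \<Rightarrow> real" where
  "weights_KL n q = - (\<Sum>k<n. ln (real n * q k)) / real n"

definition weighted_mean :: "nat \<Rightarrow> (nat \<Rightarrow> real) \<Rightarrow> real \<Rightarrow> (nat \<Rightarrow> real) \<Rightarrow> real" where
  "weighted_mean n q q0 x = (\<Sum>k<n. q k * x k) + q0"

lemma pmf_of_list_wf_reweighting:
  assumes "admissible_weights n q q0"
  shows "pmf_of_list_wf ((1, q0) # map (\<lambda>k. (x k, q k)) [0..<n])"
proof (rule pmf_of_list_wfI)
  show "0 \<le> w" if "w \<in> set (map snd ((1, q0) # map (\<lambda>k. (x k, q k)) [0..<n]))" for w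
    using assms that unfolding admissible_weights_def by (auto simp: less_imp_le)
  show "sum_list (map snd ((1, q0) # map (\<lambda>k. (x k, q k)) [0..<n])) = 1"
    using assms unfolding admissible_weights_def
    by (simp add: o_def interv_sum_list_conv_sum_set_nat atLeast0LessThan)
qed

lemma pmf_reweighting:
  assumes "admissible_weights n q q0"
  shows "pmf (reweighting n q q0 x) y = (\<Sum>k\<in>{k. k < n \<and> x k = y}. q k) + (if y = 1 then q0 else 0)"
proof -
  have "pmf (reweighting n q q0 x) y
      = (if y = 1 then q0 else 0) + sum_list (map q (filter (\<lambda>k. x k = y) [0..<n]))"
    unfolding reweighting_def pmf_pmf_of_list[OF pmf_of_list_wf_reweighting[OF assms]]
    by (simp add: filter_map o_def)
  also have "sum_list (map q (filter (\<lambda>k. x k = y) [0..<n])) = (\<Sum>k\<in>{k. k < n \<and> x k = y}. q k)"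
    by (subst sum_list_distinct_conv_sum_set) (auto intro: sum.cong)
  finally show ?thesis by simp
qed

lemma set_pmf_reweighting_subset:
  "admissible_weights n q q0 \<Longrightarrow> set_pmf (reweighting n q q0 x) \<subseteq> insert 1 (x ` {..<n})"
  unfolding reweighting_def by (drule pmf_of_list_wf_reweighting[of _ _ _ x], drule set_pmf_of_list) auto

lemma samples_subset_set_pmf_reweighting:
  assumes "admissible_weights n q q0"
  shows "x ` {..<n} \<subseteq> set_pmf (reweighting n q q0 x)"
proof
  fix y assume "y \<in> x ` {..<n}"
  then obtain k where "k < n" "x k = y" by auto
  with assms have "0 < (\<Sum>k\<in>{k. k < n \<and> x k = y}. q k)" "0 \<le> (if y = 1 then q0 else 0)"
    unfolding admissible_weights_def by (auto intro!: sum_pos)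
  then show "y \<in> set_pmf (reweighting n q q0 x)"
    by (simp add: set_pmf_eq' pmf_reweighting[OF assms])
qed

lemma pmf_mean_eq_sum:
  "finite A \<Longrightarrow> set_pmf p \<subseteq> A \<Longrightarrow> pmf_mean p = (\<Sum>y\<in>A. pmf p y * y)"
  unfolding pmf_mean_def by (subst integral_measure_pmf_real[where A = A]) (auto simp: mult.commute)

lemma pmf_mean_le_Max:
  assumes "finite A" "set_pmf p \<subseteq> A"
  shows "pmf_mean p \<le> Max A"
proof -
  have "pmf_mean p = (\<Sum>y\<in>A. pmf p y * y)" by (rule pmf_mean_eq_sum[OF assms])
  also have "\<dots> \<le> (\<Sum>y\<in>A. pmf p y * Max A)"
    by (intro sum_mono mult_left_mono) (use assms in auto)
  also have "\<dots> = Max A" using sum_pmf_eq_1[OF assms] by (simp flip: sum_distrib_right)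
  finally show ?thesis .
qed

lemma pmf_mean_reweighting:
  assumes "admissible_weights n q q0"
  shows "pmf_mean (reweighting n q q0 x) = weighted_mean n q q0 x"
proof -
  let ?A = "insert 1 (x ` {..<n})"
  let ?S = "\<lambda>y. \<Sum>k\<in>{k. k < n \<and> x k = y}. q k * x k"
  have "pmf_mean (reweighting n q q0 x) = (\<Sum>y\<in>?A. pmf (reweighting n q q0 x) y * y)"
    by (rule pmf_mean_eq_sum) (use set_pmf_reweighting_subset[OF assms] in auto)
  also have "\<dots> = (\<Sum>y\<in>?A. ?S y + (if y = 1 then q0 else 0))"
    by (intro sum.cong refl)
       (auto simp: pmf_reweighting[OF assms] distrib_right sum_distrib_right intro!: sum.cong)
  also have "\<dots> = (\<Sum>y\<in>?A. ?S y) + q0"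
    by (simp add: sum.distrib)
  also have "(\<Sum>y\<in>?A. ?S y) = (\<Sum>y\<in>x ` {..<n}. ?S y)"
    by (rule sum.mono_neutral_right) (auto intro!: sum.neutral)
  also have "\<dots> = (\<Sum>k<n. q k * x k)"
    using sum.image_gen[of "{..<n}" "\<lambda>k. q k * x k" x] by simp
  finally show ?thesis unfolding weighted_mean_def .
qed

lemma KL_empirical:
  assumes "n \<ge> 1" "x ` {..<n} \<subseteq> set_pmf p"
  shows "KL (empirical n x) p
       = ereal ((\<Sum>k<n. ln (real (sample_count n x (x k)) / (real n * pmf p (x k)))) / real n)"
proof -
  have "KL (empirical n x) p = ereal (\<Sum>y\<in>set_pmf (empirical n x).
          pmf (empirical n x) y * ln (pmf (empirical n x) y / pmf p y))"
    unfolding KL_def using assms by (simp add: set_pmf_empirical)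
  also have "\<dots> = ereal ((\<Sum>k<n. ln (pmf (empirical n x) (x k) / pmf p (x k))) / real n)"
    by (simp only: sum_empirical_eq_average[OF assms(1)])
  finally show ?thesis
    by (simp add: pmf_empirical[OF assms(1)])
qed

lemma sum_count_ratio_reweighting_le:
  assumes "admissible_weights n q q0"
  shows "(\<Sum>k<n. real (sample_count n x (x k)) * q k / pmf (reweighting n q q0 x) (x k)) \<le> real n"
proof -
  let ?p = "reweighting n q q0 x"
  let ?Q = "\<lambda>y. \<Sum>k\<in>{k. k \<in> {..<n} \<and> x k = y}. q k"
  have "(\<Sum>k<n. real (sample_count n x (x k)) * q k / pmf ?p (x k))
      = (\<Sum>y\<in>x ` {..<n}. real (sample_count n x y) * (?Q y / pmf ?p y))"
    using sum.image_gen[of "{..<n}" "\<lambda>k. real (sample_count n x (x k)) * q k / pmf ?p (x k)" x]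
    by (simp add: sum_divide_distrib sum_distrib_left)
  also have "\<dots> \<le> (\<Sum>y\<in>x ` {..<n}. real (sample_count n x y) * 1)"
  proof (intro sum_mono mult_left_mono)
    fix y assume "y \<in> x ` {..<n}"
    then have "pmf ?p y > 0"
      using samples_subset_set_pmf_reweighting[OF assms, of x] by (auto simp: set_pmf_iff)
    moreover have "?Q y \<le> pmf ?p y"
      using assms unfolding admissible_weights_def by (simp add: pmf_reweighting[OF assms])
    ultimately show "?Q y / pmf ?p y \<le> 1" by simp
  qed simp
  also have "\<dots> = real n" using sum_sample_count[of n x] by simp
  finally show ?thesis .
qed

text \<open>Gibbs' inequality in the form \<open>ln r \<le> r - 1\<close>, summed over the samples.\<close>
lemma KL_empirical_reweighting_le:
  assumes n: "n \<ge> 1" and q: "admissible_weights n q q0"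
  shows "KL (empirical n x) (reweighting n q q0 x) \<le> ereal (weights_KL n q)"
proof -
  let ?p = "reweighting n q q0 x"
  let ?c = "\<lambda>k. real (sample_count n x (x k))"
  define r where "r k = ?c k * q k / pmf ?p (x k)" for k
  have sub: "x ` {..<n} \<subseteq> set_pmf ?p" by (rule samples_subset_set_pmf_reweighting[OF q])
  have "ln (?c k / (real n * pmf ?p (x k))) + ln (real n * q k) \<le> r k - 1" if "k < n" for k
  proof -
    have pos: "pmf ?p (x k) > 0" "q k > 0" "?c k > 0"
      using sub that q sample_count_pos[OF that, of x]
      by (auto simp: set_pmf_iff admissible_weights_def)
    then have "ln (?c k / (real n * pmf ?p (x k))) + ln (real n * q k) = ln (r k)"
      using n by (simp add: r_def ln_mult_pos[symmetric] field_simps)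
    also have "\<dots> \<le> r k - 1" using pos by (intro ln_le_minus_one) (simp add: r_def)
    finally show ?thesis .
  qed
  then have "(\<Sum>k<n. ln (?c k / (real n * pmf ?p (x k))) + ln (real n * q k)) \<le> (\<Sum>k<n. r k - 1)"
    by (intro sum_mono) auto
  also have "\<dots> \<le> 0"
    using sum_count_ratio_reweighting_le[OF q, of x] by (simp add: r_def sum_subtractf)
  finally have "(\<Sum>k<n. ln (?c k / (real n * pmf ?p (x k)))) \<le> - (\<Sum>k<n. ln (real n * q k))"
    by (simp add: sum.distrib)
  then have "(\<Sum>k<n. ln (?c k / (real n * pmf ?p (x k)))) / real n \<le> weights_KL n q"
    unfolding weights_KL_def by (intro divide_right_mono) auto
  then show ?thesis using KL_empirical[OF n sub] by simp
qed

definition pmf_weights :: "real pmf \<Rightarrow> nat \<Rightarrow> (nat \<Rightarrow> real) \<Rightarrow> nat \<Rightarrow> real" where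
  "pmf_weights p n x k = pmf p (x k) / real (sample_count n x (x k))"

lemma sum_pmf_weights: "(\<Sum>k<n. pmf_weights p n x k) = (\<Sum>y\<in>x ` {..<n}. pmf p y)"
  unfolding pmf_weights_def by (rule sum_samples_grouped)

lemma admissible_pmf_weights:
  assumes "finite (set_pmf p)" "x ` {..<n} \<subseteq> set_pmf p"
  shows "admissible_weights n (pmf_weights p n x) (1 - (\<Sum>k<n. pmf_weights p n x k))"
proof -
  have "(\<Sum>y\<in>x ` {..<n}. pmf p y) \<le> (\<Sum>y\<in>set_pmf p. pmf p y)"
    by (rule sum_mono2[OF assms]) simp
  then have "(\<Sum>k<n. pmf_weights p n x k) \<le> 1"
    using sum_pmf_eq_1[OF assms(1) order_refl] by (simp add: sum_pmf_weights)
  moreover have "pmf_weights p n x k > 0" if "k < n" for k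
    using assms(2) that sample_count_pos[OF that, of x]
    by (auto simp: pmf_weights_def set_pmf_iff)
  ultimately show ?thesis unfolding admissible_weights_def by simp
qed

lemma KL_empirical_eq_weights_KL:
  assumes n: "n \<ge> 1" and sub: "x ` {..<n} \<subseteq> set_pmf p"
  shows "KL (empirical n x) p = ereal (weights_KL n (pmf_weights p n x))"
proof -
  have "ln (real (sample_count n x (x k)) / (real n * pmf p (x k)))
      = - ln (real n * pmf_weights p n x k)" if "k < n" for k
  proof -
    have "pmf p (x k) > 0" using sub that by (auto simp: set_pmf_iff)
    then have "real (sample_count n x (x k)) / (real n * pmf p (x k))
             = inverse (real n * pmf_weights p n x k)"
      using n sample_count_pos[OF that, of x] by (simp add: pmf_weights_def field_simps)
    then show ?thesis by (simp only: ln_inverse)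
  qed
  then show ?thesis
    unfolding KL_empirical[OF n sub] weights_KL_def by (simp add: sum_negf[symmetric])
qed

lemma pmf_mean_le_weighted_mean_pmf_weights:
  assumes fin: "finite (set_pmf p)" and sub: "x ` {..<n} \<subseteq> set_pmf p"
    and le1: "\<forall>y\<in>set_pmf p - x ` {..<n}. y \<le> 1"
  shows "pmf_mean p \<le> weighted_mean n (pmf_weights p n x) (1 - (\<Sum>k<n. pmf_weights p n x k)) x"
proof -
  let ?R = "set_pmf p - x ` {..<n}"
  have split: "(\<Sum>y\<in>set_pmf p. f y) = (\<Sum>y\<in>?R. f y) + (\<Sum>y\<in>x ` {..<n}. f y)"
    for f :: "real \<Rightarrow> real"
    by (rule sum.subset_diff[OF sub fin])
  have "pmf_mean p = (\<Sum>y\<in>?R. pmf p y * y) + (\<Sum>y\<in>x ` {..<n}. pmf p y * y)"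
    by (simp add: pmf_mean_eq_sum[OF fin] split)
  also have "(\<Sum>y\<in>?R. pmf p y * y) \<le> (\<Sum>y\<in>?R. pmf p y)"
    by (rule sum_mono) (use le1 in \<open>auto intro: mult_left_le\<close>)
  also have "(\<Sum>y\<in>?R. pmf p y) = 1 - (\<Sum>k<n. pmf_weights p n x k)"
    using split[of "pmf p"] sum_pmf_eq_1[OF fin order_refl] by (simp add: sum_pmf_weights)
  also have "(\<Sum>y\<in>x ` {..<n}. pmf p y * y) = (\<Sum>k<n. pmf_weights p n x k * x k)"
    unfolding pmf_weights_def by (subst sum_samples_grouped[symmetric]) (simp add: field_simps)
  finally show ?thesis unfolding weighted_mean_def by simp
qed

section \<open>The two events in terms of weights\<close>

lemma samples_subset_if_KL_empirical_finite:
  "n \<ge> 1 \<Longrightarrow> KL (empirical n x) p \<noteq> \<infinity> \<Longrightarrow> x ` {..<n} \<subseteq> set_pmf p"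
  unfolding KL_def by (auto simp: set_pmf_empirical split: if_splits)

lemma weights_dominating_KL_ball:
  assumes n: "n \<ge> 1" and p: "set_pmf p \<subseteq> insert 1 (x ` {..<n})"
    and KL: "KL (empirical n x) p \<le> ereal \<epsilon>"
  shows "\<exists>q q0. admissible_weights n q q0 \<and> weights_KL n q \<le> \<epsilon> \<and> pmf_mean p \<le> weighted_mean n q q0 x"
proof -
  have sub: "x ` {..<n} \<subseteq> set_pmf p"
    using KL by (intro samples_subset_if_KL_empirical_finite[OF n]) auto
  have fin: "finite (set_pmf p)" by (rule finite_subset[OF p]) auto
  show ?thesis
    using admissible_pmf_weights[OF fin sub] KL_empirical_eq_weights_KL[OF n sub] KL p
      pmf_mean_le_weighted_mean_pmf_weights[OF fin sub]
    by (intro exI conjI) auto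
qed

lemma KL_empirical_ge_if_weighted_means_le:
  assumes n: "n \<ge> 1" and fin: "finite (set_pmf p)" and le1: "\<forall>y\<in>set_pmf p. y \<le> 1"
    and mean: "\<mu> < pmf_mean p"
    and dual: "x ` {..<n} \<subseteq> set_pmf p \<Longrightarrow>
      \<forall>q q0. admissible_weights n q q0 \<and> weights_KL n q < \<epsilon> \<longrightarrow> weighted_mean n q q0 x \<le> \<mu>"
  shows "ereal \<epsilon> \<le> KL (empirical n x) p"
proof (cases "x ` {..<n} \<subseteq> set_pmf p")
  case False
  then show ?thesis using samples_subset_if_KL_empirical_finite[OF n] by force
next
  case sub: True
  have "pmf_mean p \<le> weighted_mean n (pmf_weights p n x) (1 - (\<Sum>k<n. pmf_weights p n x k)) x"
    using le1 by (intro pmf_mean_le_weighted_mean_pmf_weights[OF fin sub]) auto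
  then have "\<not> weights_KL n (pmf_weights p n x) < \<epsilon>"
    using dual[OF sub] admissible_pmf_weights[OF fin sub] mean by force
  then show ?thesis using KL_empirical_eq_weights_KL[OF n sub] by simp
qed

lemma Ucb_empirical_le_iff:
  assumes n: "n \<ge> 1" and eps: "\<epsilon> \<ge> 0"
  shows "Ucb (empirical n x) \<epsilon> \<le> \<mu> \<longleftrightarrow>
    (\<forall>q q0. admissible_weights n q q0 \<and> weights_KL n q \<le> \<epsilon> \<longrightarrow> weighted_mean n q q0 x \<le> \<mu>)"
    (is "_ \<longleftrightarrow> ?dual")
proof -
  let ?e = "empirical n x"
  define S where "S = {pmf_mean p | p. set_pmf p \<subseteq> set_pmf ?e \<union> {1} \<and> KL ?e p \<le> ereal \<epsilon>}"
  have supp: "set_pmf ?e \<union> {1} = insert 1 (x ` {..<n})" using set_pmf_empirical[OF n] by auto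
  have weighted_mean_in_S: "weighted_mean n q q0 x \<in> S"
    if q: "admissible_weights n q q0" and le: "weights_KL n q \<le> \<epsilon>" for q q0
  proof -
    have "KL ?e (reweighting n q q0 x) \<le> ereal \<epsilon>"
      using KL_empirical_reweighting_le[OF n q, of x] le by (simp add: order_trans)
    then show ?thesis
      unfolding S_def using set_pmf_reweighting_subset[OF q, of x] supp pmf_mean_reweighting[OF q]
      by (intro CollectI exI[of _ "reweighting n q q0 x"]) auto
  qed
  have "S \<noteq> {}"
    using weighted_mean_in_S[of "\<lambda>k. 1 / real n" 0] n eps
    by (auto simp: admissible_weights_def weights_KL_def)
  moreover have "bdd_above S"
  proof (rule bdd_aboveI)
    fix s assume "s \<in> S"
    then obtain p where "s = pmf_mean p" "set_pmf p \<subseteq> insert 1 (x ` {..<n})"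
      unfolding S_def using supp by auto
    then show "s \<le> Max (insert 1 (x ` {..<n}))" by (simp add: pmf_mean_le_Max)
  qed
  ultimately have "Ucb ?e \<epsilon> \<le> \<mu> \<longleftrightarrow> (\<forall>s\<in>S. s \<le> \<mu>)"
    unfolding Ucb_def S_def[symmetric] by (rule cSup_le_iff)
  also have "\<dots> \<longleftrightarrow> ?dual"
  proof
    show "\<forall>s\<in>S. s \<le> \<mu> \<Longrightarrow> ?dual" using weighted_mean_in_S by blast
  next
    assume ?dual
    show "\<forall>s\<in>S. s \<le> \<mu>"
    proof
      fix s assume "s \<in> S"
      then obtain p where "s = pmf_mean p" "set_pmf p \<subseteq> insert 1 (x ` {..<n})" "KL ?e p \<le> ereal \<epsilon>"
        unfolding S_def using supp by auto
      with \<open>?dual\<close> show "s \<le> \<mu>" using weights_dominating_KL_ball[OF n] by (meson order_trans)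
    qed
  qed
  finally show ?thesis .
qed

lemma Kinf_empirical_ge_iff:
  assumes n: "n \<ge> 1"
  shows "ereal \<epsilon> \<le> Kinf (empirical n x) \<mu> \<longleftrightarrow> \<not> (\<forall>k<n. x k \<in> {0..1}) \<or>
    (\<forall>q q0. admissible_weights n q q0 \<and> weights_KL n q < \<epsilon> \<longrightarrow> weighted_mean n q q0 x \<le> \<mu>)"
    (is "_ \<longleftrightarrow> \<not> ?cube \<or> ?dual")
proof -
  let ?e = "empirical n x"
  have Kinf_ge: "ereal \<epsilon> \<le> Kinf ?e \<mu> \<longleftrightarrow> (\<forall>p \<in> F_class. \<mu> < pmf_mean p \<longrightarrow> ereal \<epsilon> \<le> KL ?e p)"
    unfolding Kinf_def le_Inf_iff by blast
  show ?thesis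
  proof
    assume Kinf: "ereal \<epsilon> \<le> Kinf ?e \<mu>"
    have ?dual if ?cube
    proof (intro allI impI)
      fix q q0 assume "admissible_weights n q q0 \<and> weights_KL n q < \<epsilon>"
      then have q: "admissible_weights n q q0" and lt: "weights_KL n q < \<epsilon>" by auto
      have "reweighting n q q0 x \<in> F_class"
        unfolding F_class_def using set_pmf_reweighting_subset[OF q, of x] \<open>?cube\<close>
        by (auto intro: finite_subset)
      moreover have "KL ?e (reweighting n q q0 x) < ereal \<epsilon>"
        using KL_empirical_reweighting_le[OF n q, of x] lt by (simp add: le_less_trans)
      ultimately have "\<not> \<mu> < pmf_mean (reweighting n q q0 x)"
        using Kinf Kinf_ge by force
      then show "weighted_mean n q q0 x \<le> \<mu>"
        using pmf_mean_reweighting[OF q, of x] by simp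
    qed
    then show "\<not> ?cube \<or> ?dual" by blast
  next
    assume dual: "\<not> ?cube \<or> ?dual"
    show "ereal \<epsilon> \<le> Kinf ?e \<mu>"
      unfolding Kinf_ge
    proof (intro ballI impI)
      fix p assume "p \<in> F_class" and mean: "\<mu> < pmf_mean p"
      then have fin: "finite (set_pmf p)" and p01: "set_pmf p \<subseteq> {0..1}"
        unfolding F_class_def by auto
      have ?dual if "x ` {..<n} \<subseteq> set_pmf p"
      proof -
        from that p01 have ?cube by blast
        with dual show ?dual by blast
      qed
      then show "ereal \<epsilon> \<le> KL ?e p"
        using p01 by (intro KL_empirical_ge_if_weighted_means_le[OF n fin _ mean]) auto
    qed
  qed
qed

lemma Kinf_ge_if_Ucb_le:
  assumes "n \<ge> 1" "\<epsilon> \<ge> 0" "Ucb (empirical n x) \<epsilon> \<le> \<mu>"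
  shows "ereal \<epsilon> \<le> Kinf (empirical n x) \<mu>"
  using assms unfolding Ucb_empirical_le_iff[OF assms(1,2)] Kinf_empirical_ge_iff[OF assms(1)]
  by (meson less_imp_le)

section \<open>The dual variable\<close>

text \<open>The integrand of the variational formula
  \<open>K\<^sub>i\<^sub>n\<^sub>f(\<nu>, \<mu>) = max\<^sub>0\<^sub>\<le>\<^sub>l\<^sub>\<le>\<^sub>1 \<integral> ln (1 - l (y - \<mu>) / (1 - \<mu>)) d\<nu>(y)\<close> of Honda and Takemura.\<close>
definition dual_factor :: "real \<Rightarrow> real \<Rightarrow> real \<Rightarrow> real" where
  "dual_factor \<mu> l y = 1 - l * (y - \<mu>) / (1 - \<mu>)"

definition dual_slope :: "nat \<Rightarrow> (nat \<Rightarrow> real) \<Rightarrow> real \<Rightarrow> real \<Rightarrow> real" where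
  "dual_slope n x \<mu> l = (\<Sum>k<n. (x k - \<mu>) / dual_factor \<mu> l (x k))"

lemma dual_factor_ge:
  assumes "\<mu> < 1" "0 \<le> l" "y \<le> 1"
  shows "1 - l \<le> dual_factor \<mu> l y"
proof -
  have "l * ((y - \<mu>) / (1 - \<mu>)) \<le> l * 1"
    using assms by (intro mult_left_mono) (auto simp: divide_le_eq)
  then show ?thesis unfolding dual_factor_def by simp
qed

lemma dual_factor_nonneg: "\<mu> < 1 \<Longrightarrow> 0 \<le> l \<Longrightarrow> l \<le> 1 \<Longrightarrow> y \<le> 1 \<Longrightarrow> 0 \<le> dual_factor \<mu> l y"
  using dual_factor_ge[of \<mu> l y] by linarith

lemma dual_factor_pos: "\<mu> < 1 \<Longrightarrow> 0 \<le> l \<Longrightarrow> l < 1 \<Longrightarrow> y \<le> 1 \<Longrightarrow> 0 < dual_factor \<mu> l y"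
  using dual_factor_ge[of \<mu> l y] by linarith

lemma dual_factor_pos_if_lt_one:
  assumes "\<mu> < 1" "0 \<le> l" "l \<le> 1" "y < 1"
  shows "0 < dual_factor \<mu> l y"
proof (cases "y \<le> \<mu>")
  case True
  then have "l * (y - \<mu>) / (1 - \<mu>) \<le> 0"
    using assms by (simp add: divide_nonpos_pos mult_nonneg_nonpos)
  then show ?thesis unfolding dual_factor_def by simp
next
  case False
  then have "l * ((y - \<mu>) / (1 - \<mu>)) \<le> 1 * ((y - \<mu>) / (1 - \<mu>))"
    using assms by (intro mult_right_mono) auto
  moreover have "(y - \<mu>) / (1 - \<mu>) < 1" using assms by (simp add: divide_less_eq)
  ultimately show ?thesis unfolding dual_factor_def by simp
qed

lemma dual_slope_zero: "dual_slope n x \<mu> 0 = (\<Sum>k<n. x k) - real n * \<mu>"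
  unfolding dual_slope_def dual_factor_def by (simp add: sum_subtractf)

lemma continuous_on_dual_slope:
  "\<mu> < 1 \<Longrightarrow> \<forall>l\<in>{a..b}. \<forall>k<n. dual_factor \<mu> l (x k) \<noteq> 0 \<Longrightarrow> continuous_on {a..b} (dual_slope n x \<mu>)"
  unfolding dual_slope_def[abs_def] dual_factor_def by (intro continuous_intros) auto

text \<open>A sample at \<open>1\<close> makes its summand blow up as \<open>l \<rightarrow> 1\<close>; at the explicit point \<open>l\<^sub>1\<close> below it
  already outweighs the other summands, each of which is at least \<open>-\<mu>\<close>.\<close>
lemma dual_slope_pos_if_sample_one:
  assumes mu: "0 < \<mu>" "\<mu> < 1" and cube: "\<forall>k<n. x k \<in> {0..1}" and k0: "k0 < n" "x k0 = 1"
  defines "l\<^sub>1 \<equiv> 1 - (1 - \<mu>) / (real n * \<mu> + 1)"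
  shows "0 < l\<^sub>1" "l\<^sub>1 < 1" "0 < dual_slope n x \<mu> l\<^sub>1"
proof -
  have "0 \<le> real n * \<mu>" using mu by simp
  then have "0 < real n * \<mu> + 1" "1 - \<mu> < real n * \<mu> + 1" using mu by linarith+
  then have d: "0 < (1 - \<mu>) / (real n * \<mu> + 1)" "(1 - \<mu>) / (real n * \<mu> + 1) < 1"
    using mu by auto
  then show l1: "0 < l\<^sub>1" "l\<^sub>1 < 1" unfolding l\<^sub>1_def by auto
  have "dual_factor \<mu> l\<^sub>1 (x k0) = (1 - \<mu>) / (real n * \<mu> + 1)"
    unfolding dual_factor_def l\<^sub>1_def k0 using mu by simp
  then have term_k0: "(x k0 - \<mu>) / dual_factor \<mu> l\<^sub>1 (x k0) = real n * \<mu> + 1"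
    using k0 d mu by (simp add: field_simps)
  have term_ge: "- \<mu> \<le> (x k - \<mu>) / dual_factor \<mu> l\<^sub>1 (x k)" if "k < n" for k
  proof (cases "x k \<le> \<mu>")
    case True
    have "1 \<le> dual_factor \<mu> l\<^sub>1 (x k)"
      unfolding dual_factor_def using True l1 mu by (simp add: divide_nonpos_pos mult_nonneg_nonpos)
    then have "x k - \<mu> \<le> (x k - \<mu>) / dual_factor \<mu> l\<^sub>1 (x k)"
      using True by (simp add: le_divide_eq mult_left_mono_neg[of 1 _ "x k - \<mu>", simplified])
    then show ?thesis using cube that by auto
  next
    case False
    then have "0 \<le> (x k - \<mu>) / dual_factor \<mu> l\<^sub>1 (x k)"
      using dual_factor_pos[of \<mu> l\<^sub>1 "x k"] mu l1 cube that by simp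
    then show ?thesis using mu by linarith
  qed
  have "dual_slope n x \<mu> l\<^sub>1
      = (x k0 - \<mu>) / dual_factor \<mu> l\<^sub>1 (x k0) + (\<Sum>k\<in>{..<n} - {k0}. (x k - \<mu>) / dual_factor \<mu> l\<^sub>1 (x k))"
    unfolding dual_slope_def by (rule sum.remove) (use k0 in auto)
  also have "\<dots> \<ge> real n * \<mu> + 1 + (\<Sum>k\<in>{..<n} - {k0}. - \<mu>)"
    unfolding term_k0 by (intro add_left_mono sum_mono) (use term_ge in auto)
  also have "real n * \<mu> + 1 + (\<Sum>k\<in>{..<n} - {k0}. - \<mu>) = \<mu> + 1"
    using k0 by (simp add: card_Diff_singleton of_nat_diff algebra_simps)
  finally show "0 < dual_slope n x \<mu> l\<^sub>1" using mu by linarith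
qed

text \<open>\<open>dual_slope\<close> is \<open>-(1 - \<mu>)\<close> times the derivative in \<open>l\<close> of \<open>\<Sum>k<n. ln (dual_factor \<mu> l (x k))\<close>,
  so the \<open>l\<close> obtained here is where that concave function is maximal on \<open>[0, 1]\<close>.\<close>
lemma dual_slope_root:
  assumes mu: "0 < \<mu>" "\<mu> < 1" and cube: "\<forall>k<n. x k \<in> {0..1}" and below: "(\<Sum>k<n. x k) < real n * \<mu>"
  shows "\<exists>l. 0 < l \<and> l \<le> 1 \<and> (\<forall>k<n. 0 < dual_factor \<mu> l (x k)) \<and>
           (dual_slope n x \<mu> l = 0 \<or> (l = 1 \<and> dual_slope n x \<mu> 1 \<le> 0))"
proof -
  have slope0: "dual_slope n x \<mu> 0 < 0" using below by (simp add: dual_slope_zero)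
  have root: "\<exists>l. 0 < l \<and> l \<le> b \<and> dual_slope n x \<mu> l = 0"
    if b: "0 < b" and pos: "\<forall>l\<in>{0..b}. \<forall>k<n. 0 < dual_factor \<mu> l (x k)"
      and slope_b: "0 \<le> dual_slope n x \<mu> b" for b
  proof -
    have "continuous_on {0..b} (dual_slope n x \<mu>)"
      using pos mu by (intro continuous_on_dual_slope) force+
    then obtain l where "0 \<le> l" "l \<le> b" "dual_slope n x \<mu> l = 0"
      using IVT'[of "dual_slope n x \<mu>" 0 0 b] slope0 b slope_b by force
    moreover from this(3) slope0 have "l \<noteq> 0" by auto
    ultimately show ?thesis by (intro exI[of _ l]) auto
  qed
  show ?thesis
  proof (cases "\<exists>k0<n. x k0 = 1")
    case True
    then obtain k0 where k0: "k0 < n" "x k0 = 1" by auto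
    define l\<^sub>1 where "l\<^sub>1 = 1 - (1 - \<mu>) / (real n * \<mu> + 1)"
    note l1 = dual_slope_pos_if_sample_one[OF mu cube k0, folded l\<^sub>1_def]
    have pos: "\<forall>l\<in>{0..l\<^sub>1}. \<forall>k<n. 0 < dual_factor \<mu> l (x k)"
      using l1 cube mu by (auto intro!: dual_factor_pos)
    obtain l where "0 < l" "l \<le> l\<^sub>1" "dual_slope n x \<mu> l = 0"
      using root[OF l1(1) pos] l1(3) by auto
    with pos l1 show ?thesis by (intro exI[of _ l]) auto
  next
    case False
    then have pos: "\<forall>l\<in>{0..1}. \<forall>k<n. 0 < dual_factor \<mu> l (x k)"
      using cube mu by (force intro!: dual_factor_pos_if_lt_one)
    show ?thesis
    proof (cases "dual_slope n x \<mu> 1 \<le> 0")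
      case True
      with pos show ?thesis by (intro exI[of _ 1]) auto
    next
      case False
      with root[OF _ pos] pos show ?thesis by force
    qed
  qed
qed

lemma admissible_weights_above_if_average_ge:
  assumes n: "n \<ge> 1" and mu: "\<mu> < 1" and eps: "\<epsilon> > 0" and avg: "real n * \<mu> \<le> (\<Sum>k<n. x k)"
  shows "\<exists>q q0. admissible_weights n q q0 \<and> weights_KL n q < \<epsilon> \<and> \<mu> < weighted_mean n q q0 x"
proof -
  define \<theta> where "\<theta> = exp (- \<epsilon> / 2)"
  have \<theta>: "0 < \<theta>" "\<theta> < 1" unfolding \<theta>_def using eps by auto
  define q where "q = (\<lambda>k::nat. \<theta> / real n)"
  have "\<theta> * \<mu> \<le> \<theta> / real n * (\<Sum>k<n. x k)"
    using mult_left_mono[OF avg, of "\<theta> / real n"] \<theta> n by simp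
  moreover have "\<mu> < \<theta> * \<mu> + (1 - \<theta>)"
    using mult_strict_left_mono[OF mu, of "1 - \<theta>"] \<theta> by (simp add: algebra_simps)
  moreover have "weighted_mean n q (1 - \<theta>) x = \<theta> / real n * (\<Sum>k<n. x k) + (1 - \<theta>)"
    unfolding weighted_mean_def q_def by (simp add: sum_distrib_left)
  ultimately have "\<mu> < weighted_mean n q (1 - \<theta>) x"
    by linarith
  moreover have "admissible_weights n q (1 - \<theta>)"
    unfolding admissible_weights_def q_def using \<theta> n by auto
  moreover have "weights_KL n q < \<epsilon>"
    unfolding weights_KL_def q_def \<theta>_def using n eps by simp
  ultimately show ?thesis by blast
qed

text \<open>Weights proportional to \<open>1 / dual_factor\<close> realise the KL projection onto
  distributions with mean \<open>\<mu>\<close>; scaling them by \<open>\<theta> < 1\<close> and putting the remaining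
  mass on the atom \<open>1\<close> pushes the mean strictly above \<open>\<mu>\<close> at a KL cost of \<open>-ln \<theta>\<close>.\<close>
definition dual_weights :: "nat \<Rightarrow> (nat \<Rightarrow> real) \<Rightarrow> real \<Rightarrow> real \<Rightarrow> real \<Rightarrow> nat \<Rightarrow> real" where
  "dual_weights n x \<mu> l \<theta> k = \<theta> / (real n * dual_factor \<mu> l (x k))"

lemma sum_inverse_dual_factor:
  assumes "\<mu> < 1" "\<forall>k<n. dual_factor \<mu> l (x k) \<noteq> 0"
  shows "(\<Sum>k<n. 1 / dual_factor \<mu> l (x k)) = real n + l / (1 - \<mu>) * dual_slope n x \<mu> l"
proof -
  have "1 / dual_factor \<mu> l (x k) = 1 + l / (1 - \<mu>) * ((x k - \<mu>) / dual_factor \<mu> l (x k))"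
    if "k < n" for k
  proof -
    let ?h = "dual_factor \<mu> l (x k)"
    have "1 - ?h = l * (x k - \<mu>) / (1 - \<mu>)" by (simp add: dual_factor_def)
    then have "l / (1 - \<mu>) * ((x k - \<mu>) / ?h) = (1 - ?h) / ?h" by simp
    moreover have "1 / ?h = 1 + (1 - ?h) / ?h" using assms that by (simp add: diff_divide_distrib)
    ultimately show ?thesis by simp
  qed
  then show ?thesis
    unfolding dual_slope_def by (simp add: sum.distrib sum_distrib_left)
qed

lemma sum_dual_weights:
  "(\<Sum>k<n. dual_weights n x \<mu> l \<theta> k) = \<theta> / real n * (\<Sum>k<n. 1 / dual_factor \<mu> l (x k))"
  by (simp add: dual_weights_def sum_distrib_left)

lemma admissible_dual_weights:
  assumes n: "n \<ge> 1" and mu: "\<mu> < 1" and \<theta>: "0 < \<theta>" "\<theta> \<le> 1" and l: "0 \<le> l"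
    and pos: "\<forall>k<n. 0 < dual_factor \<mu> l (x k)" and slope: "dual_slope n x \<mu> l \<le> 0"
  shows "admissible_weights n (dual_weights n x \<mu> l \<theta>) (1 - (\<Sum>k<n. dual_weights n x \<mu> l \<theta> k))"
proof -
  have "l / (1 - \<mu>) * dual_slope n x \<mu> l \<le> 0"
    using l mu slope by (intro mult_nonneg_nonpos) auto
  then have "(\<Sum>k<n. 1 / dual_factor \<mu> l (x k)) \<le> real n"
    using sum_inverse_dual_factor[OF mu, of n l x] pos by force
  then have "(\<Sum>k<n. dual_weights n x \<mu> l \<theta> k) \<le> \<theta> / real n * real n"
    unfolding sum_dual_weights using \<theta> by (intro mult_left_mono) auto
  then have "(\<Sum>k<n. dual_weights n x \<mu> l \<theta> k) \<le> 1"
    using n \<theta> by simp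
  then show ?thesis
    using pos \<theta> n unfolding admissible_weights_def dual_weights_def by simp
qed

lemma weights_KL_dual_weights:
  assumes n: "n \<ge> 1" and \<theta>: "0 < \<theta>" and pos: "\<forall>k<n. 0 < dual_factor \<mu> l (x k)"
  shows "weights_KL n (dual_weights n x \<mu> l \<theta>) = (\<Sum>k<n. ln (dual_factor \<mu> l (x k))) / real n - ln \<theta>"
proof -
  have "(\<Sum>k<n. ln (real n * dual_weights n x \<mu> l \<theta> k)) = (\<Sum>k<n. ln \<theta> - ln (dual_factor \<mu> l (x k)))"
    using n \<theta> pos by (intro sum.cong) (auto simp: dual_weights_def ln_div)
  then show ?thesis
    using n unfolding weights_KL_def by (simp add: sum_subtractf field_simps)
qed

lemma weighted_mean_dual_weights:
  assumes n: "n \<ge> 1" and mu: "\<mu> < 1" and pos: "\<forall>k<n. 0 < dual_factor \<mu> l (x k)"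
    and stationary: "(1 - l) * dual_slope n x \<mu> l = 0"
  shows "weighted_mean n (dual_weights n x \<mu> l \<theta>) (1 - (\<Sum>k<n. dual_weights n x \<mu> l \<theta> k)) x
       = 1 - \<theta> * (1 - \<mu>)"
proof -
  let ?h = "\<lambda>k. dual_factor \<mu> l (x k)"
  let ?T = "dual_slope n x \<mu> l" and ?S = "\<Sum>k<n. 1 / ?h k"
  define c where "c = \<theta> / real n"
  have "?S = real n + l / (1 - \<mu>) * ?T"
    using sum_inverse_dual_factor[OF mu, of n l x] pos by force
  then have "(1 - \<mu>) * ?S = (1 - \<mu>) * real n + l * ?T"
    using mu by (simp add: distrib_left)
  then have T_S: "?T - (1 - \<mu>) * ?S = - (1 - \<mu>) * real n"
    using stationary by (simp add: algebra_simps)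
  have "(\<Sum>k<n. x k / ?h k) = (\<Sum>k<n. (x k - \<mu>) / ?h k + \<mu> * (1 / ?h k))"
    by (intro sum.cong) (auto simp: diff_divide_distrib)
  then have "(\<Sum>k<n. x k / ?h k) = ?T + \<mu> * ?S"
    unfolding dual_slope_def by (simp add: sum.distrib sum_distrib_left)
  moreover have "(\<Sum>k<n. dual_weights n x \<mu> l \<theta> k * x k) = c * (\<Sum>k<n. x k / ?h k)"
    by (simp add: c_def dual_weights_def sum_distrib_left)
  moreover have "(\<Sum>k<n. dual_weights n x \<mu> l \<theta> k) = c * ?S"
    unfolding c_def by (rule sum_dual_weights)
  ultimately have "weighted_mean n (dual_weights n x \<mu> l \<theta>) (1 - (\<Sum>k<n. dual_weights n x \<mu> l \<theta> k)) x
      = 1 + c * (?T - (1 - \<mu>) * ?S)"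
    unfolding weighted_mean_def by (simp add: algebra_simps)
  also have "\<dots> = 1 - \<theta> * (1 - \<mu>)"
    unfolding T_S c_def using n by (simp add: algebra_simps)
  finally show ?thesis .
qed

lemma admissible_weights_above_if_dual_small:
  assumes n: "n \<ge> 1" and mu: "\<mu> < 1" and l: "0 < l" "l \<le> 1"
    and pos: "\<forall>k<n. 0 < dual_factor \<mu> l (x k)"
    and slope: "dual_slope n x \<mu> l = 0 \<or> (l = 1 \<and> dual_slope n x \<mu> 1 \<le> 0)"
    and small: "(\<Prod>k<n. dual_factor \<mu> l (x k)) < exp (real n * \<epsilon>)"
  shows "\<exists>q q0. admissible_weights n q q0 \<and> weights_KL n q < \<epsilon> \<and> \<mu> < weighted_mean n q q0 x"
proof -
  define G where "G = (\<Sum>k<n. ln (dual_factor \<mu> l (x k))) / real n"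
  have "real n * G = ln (\<Prod>k<n. dual_factor \<mu> l (x k))"
    unfolding G_def using n pos by (subst ln_prod) auto
  also have "\<dots> < ln (exp (real n * \<epsilon>))"
    using small pos by (subst ln_less_cancel_iff) (auto intro!: prod_pos)
  finally have G: "G < \<epsilon>" using n by simp
  define \<theta> where "\<theta> = exp ((G - \<epsilon>) / 2)"
  have \<theta>: "0 < \<theta>" "\<theta> < 1" unfolding \<theta>_def using G by auto
  have slope_le: "dual_slope n x \<mu> l \<le> 0" and stationary: "(1 - l) * dual_slope n x \<mu> l = 0"
    using slope by auto
  let ?q = "dual_weights n x \<mu> l \<theta>"
  have "admissible_weights n ?q (1 - (\<Sum>k<n. ?q k))"
    using \<theta> l by (intro admissible_dual_weights[OF n mu \<theta>(1) _ _ pos slope_le]) auto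
  moreover have "weights_KL n ?q < \<epsilon>"
  proof -
    have "weights_KL n ?q = G - (G - \<epsilon>) / 2"
      unfolding weights_KL_dual_weights[OF n \<theta>(1) pos] G_def[symmetric] by (simp add: \<theta>_def)
    with G show ?thesis by (simp add: field_simps)
  qed
  moreover have "\<mu> < weighted_mean n ?q (1 - (\<Sum>k<n. ?q k)) x"
  proof -
    have "\<theta> * (1 - \<mu>) < 1 * (1 - \<mu>)" using \<theta> mu by (intro mult_strict_right_mono) auto
    then show ?thesis unfolding weighted_mean_dual_weights[OF n mu pos stationary] by simp
  qed
  ultimately show ?thesis by blast
qed

lemma dual_factor_prod_ge_if_Kinf_ge:
  assumes n: "n \<ge> 1" and mu: "0 < \<mu>" "\<mu> < 1" and eps: "\<epsilon> > 0"
    and cube: "\<forall>k<n. x k \<in> {0..1}"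
    and dual: "\<forall>q q0. admissible_weights n q q0 \<and> weights_KL n q < \<epsilon> \<longrightarrow> weighted_mean n q q0 x \<le> \<mu>"
  shows "\<exists>l. 0 \<le> l \<and> l \<le> 1 \<and> exp (real n * \<epsilon>) \<le> (\<Prod>k<n. dual_factor \<mu> l (x k))"
proof (rule ccontr)
  assume small: "\<not> ?thesis"
  have no_weights: "\<not> (admissible_weights n q q0 \<and> weights_KL n q < \<epsilon> \<and> \<mu> < weighted_mean n q q0 x)"
    for q q0
    using dual not_le by blast
  show False
  proof (cases "real n * \<mu> \<le> (\<Sum>k<n. x k)")
    case True
    with no_weights show False using admissible_weights_above_if_average_ge[OF n mu(2) eps] by blast
  next
    case False
    then obtain l where l: "0 < l" "l \<le> 1" "\<forall>k<n. 0 < dual_factor \<mu> l (x k)"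
        "dual_slope n x \<mu> l = 0 \<or> (l = 1 \<and> dual_slope n x \<mu> 1 \<le> 0)"
      using dual_slope_root[OF mu cube] by (meson not_le)
    moreover have "(\<Prod>k<n. dual_factor \<mu> l (x k)) < exp (real n * \<epsilon>)"
      using small l(1,2) less_imp_le not_le by blast
    ultimately show False
      using admissible_weights_above_if_dual_small[OF n mu(2)] no_weights by blast
  qed
qed

section \<open>Discretising the dual variable\<close>

lemma dual_factor_affine: "dual_factor \<mu> l y = 1 - l * ((y - \<mu>) / (1 - \<mu>))"
  unfolding dual_factor_def by simp

text \<open>Moving \<open>l\<close> towards \<open>0\<close> or \<open>1\<close> costs at most a factor \<open>\<theta>\<close>, because \<open>dual_factor\<close> is affine
  in \<open>l\<close>, equal to \<open>1\<close> at \<open>l = 0\<close> and nonnegative at \<open>l = 1\<close>.\<close>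
lemma dual_factor_shrink_towards_zero:
  assumes "0 \<le> \<theta>" "\<theta> \<le> 1"
  shows "\<theta> * dual_factor \<mu> l y \<le> dual_factor \<mu> (\<theta> * l) y"
proof -
  have "\<And>a. 1 - \<theta> * l * a = \<theta> * (1 - l * a) + (1 - \<theta>)"
    by (simp add: algebra_simps)
  then have "dual_factor \<mu> (\<theta> * l) y = \<theta> * dual_factor \<mu> l y + (1 - \<theta>)"
    unfolding dual_factor_affine .
  then show ?thesis using assms by simp
qed

lemma dual_factor_shrink_towards_one:
  assumes "\<mu> < 1" "0 \<le> \<theta>" "\<theta> \<le> 1" "y \<le> 1"
  shows "\<theta> * dual_factor \<mu> l y \<le> dual_factor \<mu> (1 - \<theta> * (1 - l)) y"
proof -
  have "\<And>a. 1 - (1 - \<theta> * (1 - l)) * a = \<theta> * (1 - l * a) + (1 - \<theta>) * (1 - 1 * a)"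
    by (simp add: algebra_simps)
  then have "dual_factor \<mu> (1 - \<theta> * (1 - l)) y = \<theta> * dual_factor \<mu> l y + (1 - \<theta>) * dual_factor \<mu> 1 y"
    unfolding dual_factor_affine .
  moreover have "0 \<le> dual_factor \<mu> 1 y" using assms by (intro dual_factor_nonneg) auto
  ultimately show ?thesis using assms by simp
qed

lemma grid_point_near:
  fixes l :: real
  assumes l: "0 \<le> l" "l \<le> 1"
  shows "\<exists>j\<le>n + 1. \<exists>\<theta>. real n / (real n + 1) \<le> \<theta> \<and> \<theta> \<le> 1 \<and>
           (real j / (real n + 1) = \<theta> * l \<or> real j / (real n + 1) = 1 - \<theta> * (1 - l))"
proof -
  define N where "N = real n + 1"
  have N: "N > 0" unfolding N_def by simp
  define j where "j = nat \<lfloor>l * N\<rfloor>"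
  have j: "real j \<le> l * N" "l * N < real j + 1"
    unfolding j_def using l N by (simp_all add: of_nat_nat)
  show ?thesis
  proof (cases "real n * l \<le> real j")
    case True
    show ?thesis
    proof (cases "l = 0")
      case True
      then show ?thesis by (intro exI[of _ 0]) (auto intro!: exI[of _ 1] simp: field_simps)
    next
      case False
      define \<theta> where "\<theta> = real j / N / l"
      have "real n / N \<le> \<theta>" "\<theta> \<le> 1" "real j / N = \<theta> * l"
        unfolding \<theta>_def using \<open>real n * l \<le> real j\<close> j False l N by (auto simp: field_simps)
      moreover have "j \<le> n + 1" using j l N unfolding N_def by (smt (verit) mult_left_le_one_le of_nat_le_iff of_nat_1 of_nat_add)
      ultimately show ?thesis unfolding N_def by blast
    qed
  next
    case False
    have "real n * l \<le> real n" using l by (simp add: mult_left_le)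
    with False j have l1: "l < 1" and jn: "real j + 1 \<le> N"
      unfolding N_def by (auto simp: algebra_simps)
    define \<theta> where "\<theta> = (1 - (real j + 1) / N) / (1 - l)"
    have "real n * (1 - l) \<le> N - (real j + 1)"
      using False unfolding N_def by (simp add: algebra_simps)
    then have "real n * (1 - l) / N \<le> (N - (real j + 1)) / N"
      using N by (intro divide_right_mono) auto
    also have "\<dots> = 1 - (real j + 1) / N"
      using N by (simp add: diff_divide_distrib)
    finally have "real n * (1 - l) / N \<le> 1 - (real j + 1) / N" .
    then have "real n / N \<le> \<theta>"
      unfolding \<theta>_def using l1 N by (simp add: field_simps)
    moreover have "\<theta> \<le> 1" "real (Suc j) / N = 1 - \<theta> * (1 - l)"
      unfolding \<theta>_def using j jn l1 N by (auto simp: field_simps)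
    moreover have "Suc j \<le> n + 1" using jn unfolding N_def by linarith
    ultimately show ?thesis unfolding N_def by blast
  qed
qed

lemma exp_minus_one_le_power: "exp (-1) \<le> (real n / (real n + 1)) ^ n"
proof (cases "n = 0")
  case False
  then have "1 + 1 / real n \<le> exp (1 / real n)" by (intro exp_ge_add_one_self)
  then have "exp (- (1 / real n)) \<le> real n / (real n + 1)"
    using False by (simp add: exp_minus field_simps)
  then have "exp (- (1 / real n)) ^ n \<le> (real n / (real n + 1)) ^ n"
    by (intro power_mono) auto
  then show ?thesis using False by (simp add: exp_of_nat_mult[symmetric])
qed simp

lemma dual_factor_prod_grid:
  assumes mu: "\<mu> < 1" and l: "0 \<le> l" "l \<le> 1" and cube: "\<forall>k<n. x k \<in> {0..1}"
  shows "\<exists>j\<le>n + 1. exp (-1) * (\<Prod>k<n. dual_factor \<mu> l (x k))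
                    \<le> (\<Prod>k<n. dual_factor \<mu> (real j / (real n + 1)) (x k))"
proof -
  obtain j \<theta> where j: "j \<le> n + 1" and \<theta>: "real n / (real n + 1) \<le> \<theta>" "\<theta> \<le> 1"
    and grid: "real j / (real n + 1) = \<theta> * l \<or> real j / (real n + 1) = 1 - \<theta> * (1 - l)"
    using grid_point_near[OF l] by blast
  have \<theta>0: "0 \<le> \<theta>" using \<theta>(1) by (smt (verit) divide_nonneg_nonneg of_nat_0_le_iff)
  have factor: "\<theta> * dual_factor \<mu> l y \<le> dual_factor \<mu> (real j / (real n + 1)) y" if "y \<le> 1" for y
    using grid dual_factor_shrink_towards_zero[OF \<theta>0 \<theta>(2)]
      dual_factor_shrink_towards_one[OF mu \<theta>0 \<theta>(2) that] by auto
  have "exp (-1) * (\<Prod>k<n. dual_factor \<mu> l (x k)) \<le> \<theta> ^ n * (\<Prod>k<n. dual_factor \<mu> l (x k))"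
    using exp_minus_one_le_power[of n] power_mono[OF \<theta>(1), of n] cube mu l
    by (intro mult_right_mono prod_nonneg dual_factor_nonneg) auto
  also have "\<dots> = (\<Prod>k<n. \<theta> * dual_factor \<mu> l (x k))"
    by (simp add: prod.distrib)
  also have "\<dots> \<le> (\<Prod>k<n. dual_factor \<mu> (real j / (real n + 1)) (x k))"
    using cube mu l \<theta>0 factor by (intro prod_mono) (auto intro!: mult_nonneg_nonneg dual_factor_nonneg)
  finally show ?thesis using j by blast
qed

lemma dual_factor_prod_grid_if_Kinf_ge:
  assumes n: "n \<ge> 1" and mu: "0 < \<mu>" "\<mu> < 1" and eps: "\<epsilon> > 0" and cube: "\<forall>k<n. x k \<in> {0..1}"
    and Kinf: "ereal \<epsilon> \<le> Kinf (empirical n x) \<mu>"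
  shows "\<exists>j\<le>n + 1. exp (real n * \<epsilon> - 1) \<le> (\<Prod>k<n. dual_factor \<mu> (real j / (real n + 1)) (x k))"
proof -
  have "\<forall>q q0. admissible_weights n q q0 \<and> weights_KL n q < \<epsilon> \<longrightarrow> weighted_mean n q q0 x \<le> \<mu>"
    using Kinf cube Kinf_empirical_ge_iff[OF n] by blast
  then obtain l where l: "0 \<le> l" "l \<le> 1" and large: "exp (real n * \<epsilon>) \<le> (\<Prod>k<n. dual_factor \<mu> l (x k))"
    using dual_factor_prod_ge_if_Kinf_ge[OF n mu eps cube] by blast
  obtain j where "j \<le> n + 1"
    and j: "exp (-1) * (\<Prod>k<n. dual_factor \<mu> l (x k)) \<le> (\<Prod>k<n. dual_factor \<mu> (real j / (real n + 1)) (x k))"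
    using dual_factor_prod_grid[OF mu(2) l cube] by blast
  have "exp (real n * \<epsilon> - 1) = exp (-1) * exp (real n * \<epsilon>)" by (simp add: exp_add[symmetric])
  also have "\<dots> \<le> exp (-1) * (\<Prod>k<n. dual_factor \<mu> l (x k))" using large by simp
  finally show ?thesis using j \<open>j \<le> n + 1\<close> by (meson order_trans)
qed

section \<open>Measurability\<close>

lemma measurable_sample_vector:
  fixes n :: nat
  assumes "\<And>k. k < n \<Longrightarrow> X k \<in> borel_measurable M"
  shows "(\<lambda>\<omega> k. if k < n then X k \<omega> else (0 :: real)) \<in> borel_measurable M"
proof (rule measurable_coordinatewise_then_product)
  show "(\<lambda>\<omega>. if k < n then X k \<omega> else 0) \<in> borel_measurable M" for k
    using assms by (cases "k < n") auto
qed

lemma closed_weighted_mean_le: "closed {x. \<forall>q q0. P q q0 \<longrightarrow> weighted_mean n q q0 x \<le> \<mu>}"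
  unfolding weighted_mean_def
  by (intro closed_Collect_all closed_Collect_imp open_Collect_const closed_Collect_le
      continuous_intros continuous_on_product_coordinates)

lemma closed_unit_cube: "closed {x :: nat \<Rightarrow> real. \<forall>k<n. x k \<in> {0..1}}"
  unfolding atLeastAtMost_iff
  by (intro closed_Collect_all closed_Collect_imp open_Collect_const closed_Collect_conj closed_Collect_le
      continuous_on_product_coordinates continuous_on_const)

lemma sets_empirical_event:
  assumes X: "\<And>k. k < n \<Longrightarrow> X k \<in> borel_measurable M" and S: "S \<in> sets borel"
    and char: "\<And>x. P (empirical n x) \<longleftrightarrow> x \<in> S"
    and cong: "\<And>x y. (\<And>k. k < n \<Longrightarrow> x k = y k) \<Longrightarrow> x \<in> S \<longleftrightarrow> y \<in> S"
  shows "{\<omega> \<in> space M. P (empirical n (\<lambda>k. X k \<omega>))} \<in> sets M"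
proof -
  define v where "v \<omega> k = (if k < n then X k \<omega> else 0)" for \<omega> k
  have "{\<omega> \<in> space M. P (empirical n (\<lambda>k. X k \<omega>))} = v -` S \<inter> space M"
    using cong[of "\<lambda>k. X k _" "v _"] unfolding char by (auto simp: v_def)
  also have "\<dots> \<in> sets M"
    using measurable_sample_vector[OF X] S unfolding v_def[abs_def]
    by (rule measurable_sets)
  finally show ?thesis .
qed

lemma sets_Ucb_empirical_le:
  assumes "\<And>k. k < n \<Longrightarrow> X k \<in> borel_measurable M" "n \<ge> 1" "\<epsilon> \<ge> 0"
  shows "{\<omega> \<in> space M. Ucb (empirical n (\<lambda>k. X k \<omega>)) \<epsilon> \<le> \<mu>} \<in> sets M"
  by (rule sets_empirical_event[OF assms(1) borel_closed[OF closed_weighted_mean_le]])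
    (auto simp: Ucb_empirical_le_iff[OF assms(2,3)] weighted_mean_def)

lemma sets_Kinf_empirical_ge:
  assumes "\<And>k. k < n \<Longrightarrow> X k \<in> borel_measurable M" "n \<ge> 1"
  shows "{\<omega> \<in> space M. ereal \<epsilon> \<le> Kinf (empirical n (\<lambda>k. X k \<omega>)) \<mu>} \<in> sets M"
  by (rule sets_empirical_event[OF assms(1) sets.Un[OF borel_open[OF open_Collect_neg[OF closed_unit_cube]]
          borel_closed[OF closed_weighted_mean_le]]])
    (auto simp: Kinf_empirical_ge_iff[OF assms(2)] weighted_mean_def)

lemma sets_dual_factor_prod_ge:
  fixes n :: nat
  assumes "\<And>k. k < n \<Longrightarrow> X k \<in> borel_measurable M"
  shows "{\<omega> \<in> space M. c \<le> (\<Prod>k<n. dual_factor \<mu> l (X k \<omega>))} \<in> sets M"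
proof -
  have "dual_factor \<mu> l \<in> borel_measurable borel"
    unfolding dual_factor_def[abs_def] by measurable
  then have "(\<lambda>\<omega>. \<Prod>k<n. dual_factor \<mu> l (X k \<omega>)) \<in> borel_measurable M"
    using assms by (intro borel_measurable_prod) (auto intro: measurable_compose)
  then show ?thesis by measurable
qed

section \<open>Concentration\<close>

lemma integral_dual_factor:
  assumes \<nu>: "prob_space \<nu>" "sets \<nu> = sets borel" "measure \<nu> {0..1} = 1" and \<mu>: "\<mu> = (\<integral>x. x \<partial>\<nu>)"
  shows "integrable \<nu> (dual_factor \<mu> l)" "(\<integral>y. dual_factor \<mu> l y \<partial>\<nu>) = 1"
proof -
  interpret \<nu>: prob_space \<nu> by (rule \<nu>(1))
  have id: "integrable \<nu> (\<lambda>y. y)"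
  proof (rule \<nu>.integrable_const_bound[where B = 1])
    have "AE y in \<nu>. y \<in> {0..1}" using \<nu>(2,3) by (intro \<nu>.AE_prob_1) auto
    then show "AE y in \<nu>. norm y \<le> 1" by eventually_elim auto
    show "(\<lambda>y. y) \<in> borel_measurable \<nu>"
      using \<nu>(2) by (subst measurable_cong_sets) auto
  qed
  let ?c = "l / (1 - \<mu>)"
  have h: "dual_factor \<mu> l = (\<lambda>y. 1 - ?c * (y - \<mu>))"
    unfolding dual_factor_def by auto
  have int: "integrable \<nu> (\<lambda>y. ?c * (y - \<mu>))"
    using id by (intro integrable_mult_right Bochner_Integration.integrable_diff) auto
  show "integrable \<nu> (dual_factor \<mu> l)"
    unfolding h using int by (intro Bochner_Integration.integrable_diff) auto
  have "(\<integral>y. ?c * (y - \<mu>) \<partial>\<nu>) = ?c * ((\<integral>y. y \<partial>\<nu>) - \<mu>)"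
    using id by (simp add: Bochner_Integration.integral_diff \<nu>.prob_space)
  then show "(\<integral>y. dual_factor \<mu> l y \<partial>\<nu>) = 1"
    unfolding h using int \<mu> by (simp add: Bochner_Integration.integral_diff \<nu>.prob_space)
qed

context prob_space
begin

lemma AE_in_unit_interval_if_distr:
  assumes X: "X \<in> borel_measurable M" and dist: "distr M borel X = \<nu>" and one: "measure \<nu> {0..1} = 1"
  shows "AE \<omega> in M. X \<omega> \<in> {0..1::real}"
proof -
  interpret \<nu>: prob_space \<nu> using prob_space_distr[OF X] dist by simp
  have "AE y in \<nu>. y \<in> {0..1}"
    using one dist by (intro \<nu>.AE_prob_1) auto
  then have "AE y in distr M borel X. y \<in> {0..1}" by (simp only: dist)
  moreover have "{y \<in> space borel. y \<in> {0..1::real}} \<in> sets borel" by simp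
  ultimately show ?thesis using AE_distr_iff[OF X, of "\<lambda>y. y \<in> {0..1}"] by blast
qed

lemma prob_dual_factor_prod_ge:
  fixes n :: nat
  assumes ind: "indep_vars (\<lambda>_. borel) X {..<n}" and dist: "\<And>k. k < n \<Longrightarrow> distr M borel (X k) = \<nu>"
    and \<nu>: "prob_space \<nu>" "sets \<nu> = sets borel" "measure \<nu> {0..1} = 1"
    and \<mu>: "\<mu> = (\<integral>x. x \<partial>\<nu>)" "\<mu> < 1" and l: "0 \<le> l" "l \<le> 1" and c: "c > 0"
  shows "prob {\<omega> \<in> space M. c \<le> (\<Prod>k<n. dual_factor \<mu> l (X k \<omega>))} \<le> 1 / c"
proof -
  have X: "X k \<in> borel_measurable M" if "k < n" for k
    using ind that unfolding indep_vars_def by auto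
  have h: "dual_factor \<mu> l \<in> borel_measurable borel"
    unfolding dual_factor_def[abs_def] by measurable
  have int: "integrable M (\<lambda>\<omega>. dual_factor \<mu> l (X k \<omega>))"
    and one: "(\<integral>\<omega>. dual_factor \<mu> l (X k \<omega>) \<partial>M) = 1" if "k < n" for k
    using integral_dual_factor[OF \<nu> \<mu>(1)] dist[OF that]
      integrable_distr_eq[OF X[OF that] h] integral_distr[OF X[OF that] h] by simp_all
  have ind_h: "indep_vars (\<lambda>_. borel) (\<lambda>k \<omega>. dual_factor \<mu> l (X k \<omega>)) {..<n}"
    using h by (intro indep_vars_compose2[OF ind]) simp
  have "AE \<omega> in M. \<forall>k\<in>{..<n}. X k \<omega> \<in> {0..1}"
    using AE_in_unit_interval_if_distr[OF X dist \<nu>(3)] by (intro AE_finite_allI) auto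
  then have nonneg: "AE \<omega> in M. 0 \<le> (\<Prod>k<n. dual_factor \<mu> l (X k \<omega>))"
    by eventually_elim (use \<mu>(2) l in \<open>auto intro!: prod_nonneg dual_factor_nonneg\<close>)
  have "prob {\<omega> \<in> space M. c \<le> (\<Prod>k<n. dual_factor \<mu> l (X k \<omega>))}
      \<le> (\<integral>\<omega>. (\<Prod>k<n. dual_factor \<mu> l (X k \<omega>)) \<partial>M) / c"
    using indep_vars_integrable[OF _ ind_h] int
    by (intro integral_Markov_inequality_measure[OF _ _ nonneg c]) auto
  also have "\<dots> = 1 / c"
    using indep_vars_lebesgue_integral[OF _ ind_h] int one by simp
  finally show ?thesis .
qed

lemma AE_grid_if_Kinf_empirical_ge:
  fixes n :: nat
  assumes ind: "indep_vars (\<lambda>_. borel) X {..<n}"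
    and dist: "\<And>k. k < n \<Longrightarrow> distr M borel (X k) = \<nu>" and \<nu>: "measure \<nu> {0..1} = 1"
    and \<mu>: "0 < \<mu>" "\<mu> < 1" and n: "n \<ge> 1" and eps: "\<epsilon> > 0"
  shows "AE \<omega> in M. ereal \<epsilon> \<le> Kinf (empirical n (\<lambda>k. X k \<omega>)) \<mu> \<longrightarrow>
           (\<exists>j\<le>n + 1. exp (real n * \<epsilon> - 1) \<le> (\<Prod>k<n. dual_factor \<mu> (real j / (real n + 1)) (X k \<omega>)))"
proof -
  have X: "X k \<in> borel_measurable M" if "k < n" for k
    using ind that unfolding indep_vars_def by auto
  have "AE \<omega> in M. \<forall>k\<in>{..<n}. X k \<omega> \<in> {0..1}"
    using AE_in_unit_interval_if_distr[OF X dist \<nu>] by (intro AE_finite_allI) auto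
  then show ?thesis
  proof eventually_elim
    fix \<omega> assume "\<forall>k\<in>{..<n}. X k \<omega> \<in> {0..1}"
    then show "ereal \<epsilon> \<le> Kinf (empirical n (\<lambda>k. X k \<omega>)) \<mu> \<longrightarrow>
        (\<exists>j\<le>n + 1. exp (real n * \<epsilon> - 1) \<le> (\<Prod>k<n. dual_factor \<mu> (real j / (real n + 1)) (X k \<omega>)))"
      using dual_factor_prod_grid_if_Kinf_ge[OF n \<mu> eps, of "\<lambda>k. X k \<omega>"] by auto
  qed
qed

text \<open>A union bound over the \<open>n + 2\<close> grid values of \<open>l\<close>, each handled by Markov's inequality.\<close>
lemma prob_Kinf_empirical_ge:
  fixes n :: nat
  assumes ind: "indep_vars (\<lambda>_. borel) X {..<n}" and dist: "\<And>k. k < n \<Longrightarrow> distr M borel (X k) = \<nu>"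
    and \<nu>: "prob_space \<nu>" "sets \<nu> = sets borel" "measure \<nu> {0..1} = 1"
    and \<mu>: "\<mu> = (\<integral>x. x \<partial>\<nu>)" "0 < \<mu>" "\<mu> < 1" and n: "n \<ge> 1" and eps: "\<epsilon> > 0"
  shows "prob {\<omega> \<in> space M. ereal \<epsilon> \<le> Kinf (empirical n (\<lambda>k. X k \<omega>)) \<mu>}
           \<le> exp 1 * (real n + 2) * exp (- real n * \<epsilon>)"
proof -
  have X: "\<And>k. k < n \<Longrightarrow> X k \<in> borel_measurable M"
    using ind unfolding indep_vars_def by auto
  define c where "c = exp (real n * \<epsilon> - 1)"
  define A where "A j = {\<omega> \<in> space M. c \<le> (\<Prod>k<n. dual_factor \<mu> (real j / (real n + 1)) (X k \<omega>))}"
    for j :: nat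
  have A: "A j \<in> events" for j
    unfolding A_def using X by (rule sets_dual_factor_prod_ge)
  have "AE \<omega> in M. ereal \<epsilon> \<le> Kinf (empirical n (\<lambda>k. X k \<omega>)) \<mu> \<longrightarrow>
           (\<exists>j\<le>n + 1. c \<le> (\<Prod>k<n. dual_factor \<mu> (real j / (real n + 1)) (X k \<omega>)))"
    unfolding c_def by (rule AE_grid_if_Kinf_empirical_ge[OF ind _ \<nu>(3) \<mu>(2,3) n eps]) (rule dist)
  then have "AE \<omega> in M. \<omega> \<in> {\<omega> \<in> space M. ereal \<epsilon> \<le> Kinf (empirical n (\<lambda>k. X k \<omega>)) \<mu>}
                          \<longrightarrow> \<omega> \<in> (\<Union>j\<in>{..n + 1}. A j)"
    by eventually_elim (auto simp: A_def)
  then have "prob {\<omega> \<in> space M. ereal \<epsilon> \<le> Kinf (empirical n (\<lambda>k. X k \<omega>)) \<mu>}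
      \<le> prob (\<Union>j\<in>{..n + 1}. A j)"
    by (rule finite_measure_mono_AE) (use A in auto)
  also have "\<dots> \<le> (\<Sum>j\<in>{..n + 1}. prob (A j))"
    by (rule finite_measure_subadditive_finite) (use A in auto)
  also have "\<dots> \<le> (\<Sum>j\<in>{..n + 1}. 1 / c)"
  proof (rule sum_mono)
    fix j assume "j \<in> {..n + 1}"
    then have "0 \<le> real j / (real n + 1)" "real j / (real n + 1) \<le> 1"
      by (auto simp: divide_le_eq)
    then show "prob (A j) \<le> 1 / c"
      unfolding A_def c_def using prob_dual_factor_prod_ge[OF ind dist \<nu> \<mu>(1,3)] by simp
  qed
  also have "\<dots> = (real n + 2) / c"
    by simp
  also have "\<dots> = exp 1 * (real n + 2) * exp (- real n * \<epsilon>)"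
    unfolding c_def exp_diff by (simp add: exp_minus_inverse field_simps)
  finally show ?thesis .
qed

end

theorem proposition1:
  fixes M :: "'a measure" and \<nu>0 :: "real measure" and X :: "nat \<Rightarrow> 'a \<Rightarrow> real"
    and n :: nat and \<epsilon> :: real
  assumes "prob_space M"
    and "prob_space \<nu>0" and "sets \<nu>0 = sets borel" and "measure \<nu>0 {0..1} = 1"
    and "(\<integral>x. x \<partial>\<nu>0) \<in> {0<..<1}"
    and "n \<ge> 1"
    and "prob_space.indep_vars M (\<lambda>_. borel) X {..<n}"
    and "\<And>i. i < n \<Longrightarrow> distr M borel (X i) = \<nu>0"
    and "\<epsilon> > 0"
  shows "{\<omega> \<in> space M. Ucb (empirical n (\<lambda>k. X k \<omega>)) \<epsilon> \<le> (\<integral>x. x \<partial>\<nu>0)} \<in> sets M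
       \<and> {\<omega> \<in> space M. Kinf (empirical n (\<lambda>k. X k \<omega>)) (\<integral>x. x \<partial>\<nu>0) \<ge> ereal \<epsilon>} \<in> sets M
       \<and> measure M {\<omega> \<in> space M. Ucb (empirical n (\<lambda>k. X k \<omega>)) \<epsilon> \<le> (\<integral>x. x \<partial>\<nu>0)}
         \<le> measure M {\<omega> \<in> space M. Kinf (empirical n (\<lambda>k. X k \<omega>)) (\<integral>x. x \<partial>\<nu>0) \<ge> ereal \<epsilon>}
       \<and> measure M {\<omega> \<in> space M. Kinf (empirical n (\<lambda>k. X k \<omega>)) (\<integral>x. x \<partial>\<nu>0) \<ge> ereal \<epsilon>}
         \<le> exp 1 * (real n + 2) * exp (- real n * \<epsilon>)"
proof -
  interpret prob_space M by fact
  have X: "X k \<in> borel_measurable M" if "k < n" for k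
    using assms(7) that unfolding indep_vars_def by auto
  have Kinf_event: "{\<omega> \<in> space M. Kinf (empirical n (\<lambda>k. X k \<omega>)) (\<integral>x. x \<partial>\<nu>0) \<ge> ereal \<epsilon>} \<in> events"
    using sets_Kinf_empirical_ge[OF X assms(6)] by simp
  moreover have "{\<omega> \<in> space M. Ucb (empirical n (\<lambda>k. X k \<omega>)) \<epsilon> \<le> (\<integral>x. x \<partial>\<nu>0)} \<in> events"
    using sets_Ucb_empirical_le[OF X assms(6)] assms(9) by simp
  moreover have "measure M {\<omega> \<in> space M. Ucb (empirical n (\<lambda>k. X k \<omega>)) \<epsilon> \<le> (\<integral>x. x \<partial>\<nu>0)}
      \<le> measure M {\<omega> \<in> space M. Kinf (empirical n (\<lambda>k. X k \<omega>)) (\<integral>x. x \<partial>\<nu>0) \<ge> ereal \<epsilon>}"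
    using Kinf_ge_if_Ucb_le[OF assms(6)] assms(9) by (intro finite_measure_mono[OF _ Kinf_event]) auto
  moreover have "measure M {\<omega> \<in> space M. Kinf (empirical n (\<lambda>k. X k \<omega>)) (\<integral>x. x \<partial>\<nu>0) \<ge> ereal \<epsilon>}
      \<le> exp 1 * (real n + 2) * exp (- real n * \<epsilon>)"
    using assms(5) by (intro prob_Kinf_empirical_ge[OF assms(7,8,2-4) refl _ _ assms(6,9)]) auto
  ultimately show ?thesis by blast
qed

end
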